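(* There exists $\mathcal{G}\subseteq C(\mathbb{R},\mathbb{R})$ such that $\mathcal{K}_\mathcal{G}$ contains every nonempty hereditary family $\mathcal{E}\subseteq\mathrm{CL}(\mathbb{R})$.
   Context: $\mathrm{CL}(\mathbb{R})$ denotes the family of all closed subsets of $\mathbb{R}$ and $C(\mathbb{R},\mathbb{R})$ the set of all continuous functions $\mathbb{R}\to\mathbb{R}$. For $\mathcal{G}\subseteq C(\mathbb{R},\mathbb{R})$ let $R_\mathcal{G}=\{(f,E)\in C(\mathbb{R},\mathbb{R})\times\mathrm{CL}(\mathbb{R}):(\exists g\in\mathcal{G})\, f\restriction E=g\restriction E\}$. For $\mathcal{F}\subseteq C(\mathbb{R},\mathbb{R})$ put $E_\mathcal{G}(\mathcal{F})=\{E\in\mathrm{CL}(\mathbb{R}):(\forall f\in\mathcal{F})\,(f,E)\in R_\mathcal{G}\}$, and let $\mathcal{K}_\mathcal{G}=\{E_\mathcal{G}(\mathcal{F}):\mathcal{F}\subseteq C(\mathbb{R},\mathbb{R})\}$. A family $\mathcal{E}\subseteq\mathrm{CL}(\mathbb{R})$ is hereditary if for all $D,E\in\mathrm{CL}(\mathbb{R})$, $D\subseteq E\in\mathcal{E}$ implies $D\in\mathcal{E}$. *)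

theory Defs
  imports "HOL-Analysis.Analysis"
begin

definition CL :: "real set set" where
  "CL = {E. closed E}"

definition Cfun :: "(real \<Rightarrow> real) set" where
  "Cfun = {f. continuous_on UNIV f}"

definition R_G :: "(real \<Rightarrow> real) set \<Rightarrow> ((real \<Rightarrow> real) \<times> real set) set" where
  "R_G G = {(f, E). f \<in> Cfun \<and> E \<in> CL \<and> (\<exists>g\<in>G. \<forall>x\<in>E. f x = g x)}"

definition E_G :: "(real \<Rightarrow> real) set \<Rightarrow> (real \<Rightarrow> real) set \<Rightarrow> real set set" where
  "E_G G F = {E \<in> CL. \<forall>f\<in>F. (f, E) \<in> R_G G}"

definition K_G :: "(real \<Rightarrow> real) set \<Rightarrow> real set set set" where
  "K_G G = {E_G G F | F. F \<subseteq> Cfun}"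

definition hereditary :: "real set set \<Rightarrow> bool" where
  "hereditary \<E> \<longleftrightarrow> (\<forall>D E. D \<in> CL \<longrightarrow> E \<in> CL \<longrightarrow> D \<subseteq> E \<longrightarrow> E \<in> \<E> \<longrightarrow> D \<in> \<E>)"

end

theory Submission
  imports Defs
begin

text \<open>
  Enumerate the rationals as \<open>q\<^sub>0, q\<^sub>1, \<dots>\<close> and attach to every closed set \<open>D\<close> the weight
  \<open>w D = \<Sum>n. 2\<^sup>-\<^sup>n min 1 (infdist q\<^sub>n D)\<close>; it strictly decreases when a nonempty closed set is
  enlarged. Let \<open>\<G>\<close> consist of the continuous functions that are not identically \<open>-w D\<close> on any
  nonempty closed set \<open>D\<close>, and probe a closed set \<open>D\<close> with \<open>p\<^sub>D y = -w D + 3 infdist y D\<close>.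
  For a nonempty hereditary \<open>\<E>\<close> take \<open>\<F> = {p\<^sub>D | D closed, D \<notin> \<E>}\<close>.
  If \<open>E \<notin> \<E>\<close> then \<open>p\<^sub>E\<close> is the constant \<open>-w E\<close> on \<open>E \<noteq> {}\<close>, so no member of \<open>\<G>\<close> extends it.
  If \<open>E \<in> \<E>\<close> and \<open>D \<notin> \<E>\<close> then \<open>D\<close> has a point \<open>x\<close> off \<open>E\<close>, and adding to \<open>p\<^sub>D\<close> a bump at \<open>x\<close>
  supported off \<open>E\<close> gives a member of \<open>\<G>\<close>: were it \<open>-w D'\<close> on some \<open>D'\<close>, comparing
  weights would force \<open>D'\<close> to be a proper closed subset of \<open>D\<close> of the same weight.
\<close>

definition rat_enum :: "nat \<Rightarrow> real" where
  "rat_enum = from_nat_into \<rat>"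

lemma rat_enum_dense:
  fixes x d :: real
  assumes "d > 0"
  obtains n where "\<bar>rat_enum n - x\<bar> < d"
proof -
  obtain q where q: "q \<in> \<rat>" "x - d < q" "q < x + d"
    using Rats_dense_in_real[of "x - d" "x + d"] assms by auto
  have "q \<in> range rat_enum"
    unfolding rat_enum_def using q(1) countable_rat by (metis Rats_0 empty_iff range_from_nat_into)
  then obtain n where "q = rat_enum n"
    by blast
  with q show ?thesis
    using that[of n] by (simp add: abs_less_iff)
qed

definition weight_term :: "real set \<Rightarrow> nat \<Rightarrow> real" where
  "weight_term D n = (1/2)^n * min 1 (infdist (rat_enum n) D)"

definition weight :: "real set \<Rightarrow> real" where
  "weight D = (\<Sum>n. weight_term D n)"

lemma summable_weight_term: "summable (weight_term D)"
proof (rule summable_comparison_test'[where g = "\<lambda>n. (1/2)^n" and N = 0])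
  show "norm (weight_term D n) \<le> (1/2)^n" for n
    unfolding weight_term_def using infdist_nonneg[of "rat_enum n" D] by (auto simp: abs_mult)
qed simp

lemma infdist_le_infdist_add:
  fixes D D' :: "'a::metric_space set"
  assumes "D' \<noteq> {}" and "\<And>y. y \<in> D' \<Longrightarrow> infdist y D \<le> c"
  shows "infdist q D \<le> infdist q D' + c"
proof -
  have "infdist q D - c \<le> infdist q D'"
    unfolding infdist_notempty[OF assms(1)]
  proof (rule cINF_greatest[OF assms(1)])
    fix y assume "y \<in> D'"
    then show "infdist q D - c \<le> dist q y"
      using infdist_triangle[of q D y] assms(2)[of y] by simp
  qed
  then show ?thesis by simp
qed

lemma weight_le_add:
  assumes "D' \<noteq> {}" and "\<And>y. y \<in> D' \<Longrightarrow> infdist y D \<le> c"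
  shows "weight D \<le> weight D' + 2 * c"
proof -
  obtain y where "y \<in> D'"
    using assms(1) by blast
  then have "c \<ge> 0"
    using assms(2)[of y] infdist_nonneg[of y D] by linarith
  have "weight_term D n \<le> weight_term D' n + c * (1/2)^n" for n
  proof -
    have "min 1 (infdist (rat_enum n) D) \<le> min 1 (infdist (rat_enum n) D') + c"
      using infdist_le_infdist_add[OF assms, of "rat_enum n"] \<open>c \<ge> 0\<close> by linarith
    then have "(1/2)^n * min 1 (infdist (rat_enum n) D)
        \<le> (1/2)^n * (min 1 (infdist (rat_enum n) D') + c)"
      by (intro mult_left_mono) auto
    then show ?thesis
      unfolding weight_term_def by (simp add: algebra_simps)
  qed
  then have "weight D \<le> (\<Sum>n. weight_term D' n + c * (1/2)^n)"
    unfolding weight_def by (intro suminf_le summable_add summable_mult summable_weight_term) auto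
  also have "\<dots> = weight D' + c * (\<Sum>n. (1/2::real)^n)"
    unfolding weight_def
    by (simp add: suminf_add[symmetric] suminf_mult summable_weight_term summable_mult)
  also have "\<dots> = weight D' + 2 * c"
    using suminf_geometric[of "1/2::real"] by simp
  finally show ?thesis .
qed

lemma weight_less_if_psubset:
  assumes "closed D'" "D' \<noteq> {}" "D' \<subset> D"
  shows "weight D < weight D'"
proof -
  obtain x where x: "x \<in> D" "x \<notin> D'"
    using assms(3) by blast
  obtain e where e: "e > 0" "ball x e \<inter> D' = {}"
    using assms(1) x(2) open_contains_ball[of "- D'"] by (force simp: closed_def)
  define \<delta> where "\<delta> = min 1 e / 2"
  have "\<delta> > 0"
    using e(1) by (simp add: \<delta>_def)
  then obtain n where n: "\<bar>rat_enum n - x\<bar> < \<delta>"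
    by (rule rat_enum_dense)
  have near_D: "infdist (rat_enum n) D < \<delta>"
    using infdist_le[OF x(1), of "rat_enum n"] n by (simp add: dist_real_def)
  have "\<delta> \<le> infdist (rat_enum n) D'"
    unfolding infdist_notempty[OF assms(2)]
  proof (rule cINF_greatest[OF assms(2)])
    fix y assume "y \<in> D'"
    then have "e \<le> \<bar>y - x\<bar>"
      using e(2) by (force simp: dist_real_def)
    then show "\<delta> \<le> dist (rat_enum n) y"
      using n unfolding dist_real_def \<delta>_def by linarith
  qed
  moreover have "\<delta> < 1"
    by (simp add: \<delta>_def)
  ultimately have "min 1 (infdist (rat_enum n) D) < min 1 (infdist (rat_enum n) D')"
    using near_D unfolding min_def by auto
  then have "weight_term D n < weight_term D' n"
    unfolding weight_term_def by simp
  moreover have "weight_term D m \<le> weight_term D' m" for m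
    unfolding weight_term_def
    using infdist_mono[of D' D "rat_enum m"] assms by (auto intro!: mult_left_mono)
  ultimately have "0 < (\<Sum>m. weight_term D' m - weight_term D m)"
    by (intro suminf_pos2[where i = n] summable_diff summable_weight_term) auto
  also have "\<dots> = weight D' - weight D"
    unfolding weight_def by (simp add: suminf_diff summable_weight_term)
  finally show ?thesis by simp
qed

text \<open>
  The factor 3 exceeds the total mass 2 of the weights: this is what forces \<open>D' \<subseteq> D\<close> below.
\<close>
definition probe :: "real set \<Rightarrow> real \<Rightarrow> real" where
  "probe D y = - weight D + 3 * infdist y D"

lemma probe_continuous: "probe D \<in> Cfun"
  unfolding probe_def Cfun_def by (auto intro!: continuous_intros)

lemma probe_add_bump_not_weight_level:
  assumes "closed D" "x \<in> D" "\<And>y. h y \<ge> 0" "h x > 0"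
    and "closed D'" "D' \<noteq> {}"
  shows "\<not> (\<forall>y\<in>D'. probe D y + h y = - weight D')"
proof
  assume level: "\<forall>y\<in>D'. probe D y + h y = - weight D'"
  define \<Delta> where "\<Delta> = weight D - weight D'"
  have dist_bound: "infdist y D \<le> \<Delta> / 3" and h_bound: "h y \<le> \<Delta>" if "y \<in> D'" for y
    using level that assms(3)[of y] infdist_nonneg[of y D] unfolding probe_def \<Delta>_def by force+
  obtain y where "y \<in> D'"
    using assms(6) by blast
  then have "\<Delta> \<ge> 0"
    using h_bound assms(3)[of y] by fastforce
  moreover have "weight D \<le> weight D' + 2 * (\<Delta> / 3)"
    using weight_le_add[OF assms(6) dist_bound] .
  ultimately have "\<Delta> = 0"
    by (simp add: \<Delta>_def field_simps)
  have "D' \<subseteq> D"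
  proof
    fix y assume "y \<in> D'"
    then have "infdist y D = 0"
      using dist_bound[of y] infdist_nonneg[of y D] \<open>\<Delta> = 0\<close> by simp
    then show "y \<in> D"
      using in_closed_iff_infdist_zero[OF assms(1)] assms(2) by blast
  qed
  moreover have "x \<notin> D'"
    using h_bound \<open>\<Delta> = 0\<close> assms(4) by force
  ultimately have "weight D < weight D'"
    using weight_less_if_psubset[OF assms(5,6)] assms(2) by blast
  with \<open>\<Delta> = 0\<close> show False
    unfolding \<Delta>_def by simp
qed

definition avoiding_weights :: "(real \<Rightarrow> real) set" where
  "avoiding_weights =
     {g \<in> Cfun. \<forall>D'. closed D' \<and> D' \<noteq> {} \<longrightarrow> \<not> (\<forall>y\<in>D'. g y = - weight D')}"

lemma probe_self_not_in_R_G: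
  assumes "closed E" "E \<noteq> {}"
  shows "(probe E, E) \<notin> R_G avoiding_weights"
proof
  assume "(probe E, E) \<in> R_G avoiding_weights"
  then obtain g where g: "g \<in> avoiding_weights" and "\<forall>y\<in>E. probe E y = g y"
    unfolding R_G_def by blast
  then have "\<forall>y\<in>E. g y = - weight E"
    by (simp add: probe_def)
  with g assms show False
    unfolding avoiding_weights_def by blast
qed

lemma probe_in_R_G_if_not_subset:
  assumes "closed D" "closed E" "\<not> D \<subseteq> E"
  shows "(probe D, E) \<in> R_G avoiding_weights"
proof -
  obtain x where x: "x \<in> D" "x \<notin> E"
    using assms(3) by blast
  obtain e where e: "e > 0" "ball x e \<subseteq> - E"
    using assms(2) x(2) open_contains_ball[of "- E"] by (auto simp: closed_def)
  define h where "h y = max 0 (e - \<bar>y - x\<bar>)" for y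
  have "(\<lambda>y. probe D y + h y) \<in> avoiding_weights"
    using probe_add_bump_not_weight_level[OF assms(1) x(1), of h] e(1)
    unfolding avoiding_weights_def Cfun_def probe_def h_def by (auto intro!: continuous_intros)
  moreover have "h y = 0" if "y \<in> E" for y
  proof -
    have "y \<notin> ball x e"
      using e(2) that by blast
    then show ?thesis
      by (simp add: h_def dist_real_def abs_minus_commute)
  qed
  ultimately have "\<exists>g\<in>avoiding_weights. \<forall>y\<in>E. probe D y = g y"
    by (intro bexI) auto
  then show ?thesis
    unfolding R_G_def CL_def using probe_continuous assms(2) by simp
qed

lemma E_G_probes_eq:
  assumes "\<E> \<subseteq> CL" "\<E> \<noteq> {}" "hereditary \<E>"
  shows "E_G avoiding_weights {probe D | D. closed D \<and> D \<notin> \<E>} = \<E>"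
proof -
  have "{} \<in> \<E>"
    using assms unfolding hereditary_def CL_def by blast
  have "E \<in> \<E>" if "closed E" "\<forall>D. closed D \<and> D \<notin> \<E> \<longrightarrow> (probe D, E) \<in> R_G avoiding_weights" for E
    using that probe_self_not_in_R_G \<open>{} \<in> \<E>\<close> by blast
  moreover have "(probe D, E) \<in> R_G avoiding_weights" if "E \<in> \<E>" "closed D" "D \<notin> \<E>" for D E
    using that assms probe_in_R_G_if_not_subset unfolding hereditary_def CL_def by blast
  ultimately show ?thesis
    using assms(1) unfolding E_G_def CL_def by blast
qed

theorem theorem2p6:
  shows "\<exists>G. G \<subseteq> Cfun \<and>
           (\<forall>\<E>. \<E> \<subseteq> CL \<and> \<E> \<noteq> {} \<and> hereditary \<E> \<longrightarrow> \<E> \<in> K_G G)"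
proof (intro exI[of _ avoiding_weights] conjI allI impI)
  show "avoiding_weights \<subseteq> Cfun"
    unfolding avoiding_weights_def by auto
next
  fix \<E> assume "\<E> \<subseteq> CL \<and> \<E> \<noteq> {} \<and> hereditary \<E>"
  then have "E_G avoiding_weights {probe D | D. closed D \<and> D \<notin> \<E>} = \<E>"
    by (intro E_G_probes_eq) auto
  moreover have "{probe D | D. closed D \<and> D \<notin> \<E>} \<subseteq> Cfun"
    using probe_continuous by auto
  ultimately show "\<E> \<in> K_G avoiding_weights"
    unfolding K_G_def by blast
qed

end
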